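(* Let $r,t\ge 2$, let $Wd(r,t)$ be the windmill graph, $n=t(r-1)+1$ its order, and $k$ an integer with $2\le k\le n$. Then $$SW_k(Wd(r,t))=(n-1)\binom{n-1}{k-1}-t\binom{r-1}{k}.$$
   Context: The windmill graph $Wd(r,t)$ is obtained by taking $t$ copies of the complete graph $K_r$ and identifying one vertex from each copy into a single shared vertex. For $S\subseteq V(G)$, the Steiner distance $d(S)$ is the minimum number of edges of a connected subgraph whose vertex set contains $S$, and $SW_k(G)=\sum_{|S|=k} d(S)$. Convention $\binom{m}{l}=0$ for $m<l$. *)

theory Defs
  imports Main
begin

text \<open>Simple graphs: vertex set V and edge set E, each edge a 2-element set of vertices.\<close>

definition edge_rel :: "'a set set \<Rightarrow> ('a \<times> 'a) set" where
  "edge_rel F = {(u, v). {u, v} \<in> F}"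

definition connected_sub :: "'a set \<Rightarrow> 'a set set \<Rightarrow> bool" where
  "connected_sub W F \<longleftrightarrow> (\<forall>u\<in>W. \<forall>v\<in>W. (u, v) \<in> (edge_rel F)\<^sup>*)"

definition steiner_dist :: "'a set \<Rightarrow> 'a set set \<Rightarrow> 'a set \<Rightarrow> nat" where
  "steiner_dist V E S = (LEAST m. \<exists>W F. S \<subseteq> W \<and> W \<subseteq> V \<and> F \<subseteq> E \<and>
      (\<forall>e\<in>F. e \<subseteq> W) \<and> connected_sub W F \<and> card F = m)"

definition steiner_wiener :: "'a set \<Rightarrow> 'a set set \<Rightarrow> nat \<Rightarrow> nat" where
  "steiner_wiener V E k = (\<Sum>S\<in>{S. S \<subseteq> V \<and> card S = k}. steiner_dist V E S)"

text \<open>Windmill graph Wd(r,t): shared centre None; copy i (i < t) contributes the r-1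
  non-central vertices Some (i, j), j < r - 1; each copy together with the centre is a K_r.\<close>
definition wd_verts :: "nat \<Rightarrow> nat \<Rightarrow> (nat \<times> nat) option set" where
  "wd_verts r t = insert None {Some (i, j) | i j. i < t \<and> j < r - 1}"

definition wd_edges :: "nat \<Rightarrow> nat \<Rightarrow> (nat \<times> nat) option set set" where
  "wd_edges r t =
     {{None, Some (i, j)} | i j. i < t \<and> j < r - 1} \<union>
     {{Some (i, j), Some (i, j')} | i j j'. i < t \<and> j < r - 1 \<and> j' < r - 1 \<and> j \<noteq> j'}"

end

theory Submission
  imports Defs
begin

text \<open>A $k$-set $S$ of $Wd(r,t)$ that contains the centre or lies in one blade spans a star
  inside the graph, so $d(S) = k - 1$; every other $k$-set meets two blades without containing
  the centre, so every connected subgraph through $S$ must pass through the centre, giving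
  $d(S) = k$. Hence $SW_k = (k-1)\binom{n}{k} + \#\{\text{scattered } k\text{-sets}\}$, where the
  scattered $k$-sets are the $\binom{n-1}{k} - t\binom{r-1}{k}$ $k$-subsets of non-central vertices
  that do not lie in a single blade, and the identity
  $(k-1)\binom{n}{k} + \binom{n-1}{k} = (n-1)\binom{n-1}{k-1}$ finishes the computation.\<close>

lemma connected_sub_card_le:
  assumes "finite F" and "connected_sub W F" and "c \<in> W"
  shows "card W \<le> card F + 1"
proof -
  define R where "R = edge_rel F"
  have reach: "\<exists>m. (v, c) \<in> R ^^ m" if "v \<in> W" for v
    using assms(2,3) that unfolding connected_sub_def R_def by (meson rtrancl_imp_relpow)
  define dist where "dist v = (LEAST m. (v, c) \<in> R ^^ m)" for v
  have dist: "(v, c) \<in> R ^^ dist v" if "v \<in> W" for v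
    using reach[OF that] unfolding dist_def by (rule LeastI_ex)
  have dist_le: "dist v \<le> m" if "(v, c) \<in> R ^^ m" for v m
    using that unfolding dist_def by (rule Least_le)
  text \<open>Each vertex other than c has an edge towards a vertex closer to c;
    choosing one such edge per vertex is injective.\<close>
  have closer: "\<exists>u. {v, u} \<in> F \<and> dist u < dist v" if "v \<in> W - {c}" for v
  proof -
    have path: "(v, c) \<in> R ^^ dist v" using dist that by blast
    have "dist v \<noteq> 0"
      using path that by (metis DiffE insertI1 relpow_0_E)
    then obtain m where m: "dist v = Suc m" by (cases "dist v") auto
    with path obtain u where "(v, u) \<in> R" "(u, c) \<in> R ^^ m"
      by (metis relpow_Suc_D2)
    then show ?thesis using dist_le[of u m] m unfolding R_def edge_rel_def by auto
  qed
  define edge_to where "edge_to v = {v, SOME u. {v, u} \<in> F \<and> dist u < dist v}" for v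
  have edge_to: "edge_to v \<in> F \<and> (\<exists>u. edge_to v = {v, u} \<and> dist u < dist v)"
    if "v \<in> W - {c}" for v
    using someI_ex[OF closer[OF that]] unfolding edge_to_def by blast
  have "inj_on edge_to (W - {c})"
  proof (rule inj_onI)
    fix x y assume x: "x \<in> W - {c}" and y: "y \<in> W - {c}" and eq: "edge_to x = edge_to y"
    obtain u where u: "edge_to x = {x, u}" "dist u < dist x" using edge_to x by blast
    obtain w where w: "edge_to y = {y, w}" "dist w < dist y" using edge_to y by blast
    show "x = y"
    proof (rule ccontr)
      assume "x \<noteq> y"
      then have "x = w" "y = u" using eq u w by (auto simp: doubleton_eq_iff)
      then show False using u w by simp
    qed
  qed
  then have "card (W - {c}) \<le> card F"
    by (rule card_inj_on_le) (use edge_to assms(1) in blast)+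
  then show ?thesis using assms(3) by (cases "finite W") (auto simp: card_Diff_singleton)
qed

lemma connected_sub_star:
  assumes "c \<in> W"
  shows "connected_sub W ((\<lambda>x. {c, x}) ` (W - {c}))"
proof -
  let ?R = "edge_rel ((\<lambda>x. {c, x}) ` (W - {c}))"
  have "x = c \<or> (x, c) \<in> ?R \<and> (c, x) \<in> ?R" if "x \<in> W" for x
    using that unfolding edge_rel_def by (auto simp: insert_commute)
  then have "(x, c) \<in> ?R\<^sup>* \<and> (c, x) \<in> ?R\<^sup>*" if "x \<in> W" for x
    using that by blast
  then show ?thesis unfolding connected_sub_def by (meson rtrancl_trans)
qed

lemma steiner_dist_eq_star:
  assumes "finite V" and "finite E"
    and "S \<subseteq> W" and "W \<subseteq> V" and "c \<in> W"
    and star: "\<And>x. x \<in> W - {c} \<Longrightarrow> {c, x} \<in> E"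
    and minimal: "\<And>W' F. S \<subseteq> W' \<Longrightarrow> W' \<subseteq> V \<Longrightarrow> F \<subseteq> E \<Longrightarrow> \<forall>e\<in>F. e \<subseteq> W' \<Longrightarrow>
       connected_sub W' F \<Longrightarrow> card W \<le> card W'"
  shows "steiner_dist V E S = card W - 1"
  unfolding steiner_dist_def
proof (rule Least_equality)
  let ?F = "(\<lambda>x. {c, x}) ` (W - {c})"
  have "inj_on (\<lambda>x. {c, x}) (W - {c})"
    by (rule inj_onI) (auto simp: doubleton_eq_iff)
  then have "card ?F = card W - 1"
    using assms(5) by (simp add: card_image)
  then show "\<exists>W' F. S \<subseteq> W' \<and> W' \<subseteq> V \<and> F \<subseteq> E \<and> (\<forall>e\<in>F. e \<subseteq> W') \<and>
      connected_sub W' F \<and> card F = card W - 1"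
    using assms(3-5) star connected_sub_star[OF assms(5)] by (intro exI[of _ W] exI[of _ ?F]) auto
next
  fix m
  assume "\<exists>W' F. S \<subseteq> W' \<and> W' \<subseteq> V \<and> F \<subseteq> E \<and> (\<forall>e\<in>F. e \<subseteq> W') \<and>
      connected_sub W' F \<and> card F = m"
  then obtain W' F where W': "S \<subseteq> W'" "W' \<subseteq> V" "F \<subseteq> E" "\<forall>e\<in>F. e \<subseteq> W'"
      "connected_sub W' F" "card F = m"
    by blast
  have "card W \<le> card W'" using minimal W' by blast
  moreover have "W' \<noteq> {}"
    using calculation assms(1,4,5) W'(2) by (metis card_0_eq empty_iff finite_subset le_0_eq)
  then obtain c' where "c' \<in> W'" by blast
  then have "card W' \<le> card F + 1"
    using connected_sub_card_le W'(3,5) assms(2) finite_subset by metis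
  ultimately show "card W - 1 \<le> m" using W'(6) by linarith
qed

lemma binomial_weighted_sum:
  assumes "1 \<le> k" and "k \<le> N + 1"
  shows "(k - 1) * (Suc N choose k) + (N choose k) = N * (N choose (k - 1))"
proof -
  obtain k' where k: "k = Suc k'" and "k' \<le> N" using assms by (cases k) auto
  have absorb: "Suc k' * (N choose Suc k') = (N - k') * (N choose k')"
    by (metis binomial_absorb_comp times_binomial_minus1_eq zero_less_Suc diff_Suc_1
        mult.commute)
  have "k' * (Suc N choose Suc k') + (N choose Suc k')
      = k' * (N choose k') + Suc k' * (N choose Suc k')"
    by (simp add: algebra_simps)
  also have "\<dots> = (k' + (N - k')) * (N choose k')"
    by (simp only: absorb add_mult_distrib)
  also have "\<dots> = N * (N choose k')" using \<open>k' \<le> N\<close> by simp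
  finally show ?thesis using k by simp
qed

definition blade :: "nat \<Rightarrow> nat \<Rightarrow> (nat \<times> nat) option set" where
  "blade r i = (\<lambda>j. Some (i, j)) ` {..<r - 1}"

text \<open>The sets that avoid the centre yet meet two blades: exactly those whose Steiner trees
  need the centre as an extra vertex.\<close>
definition scattered :: "nat \<Rightarrow> nat \<Rightarrow> (nat \<times> nat) option set \<Rightarrow> bool" where
  "scattered r t S \<longleftrightarrow> None \<notin> S \<and> (\<forall>i<t. \<not> S \<subseteq> blade r i)"

lemma wd_verts_eq: "wd_verts r t = insert None (Some ` ({..<t} \<times> {..<r - 1}))"
  unfolding wd_verts_def by auto

lemma finite_wd_verts: "finite (wd_verts r t)"
  unfolding wd_verts_eq by simp

lemma card_wd_verts: "card (wd_verts r t) = t * (r - 1) + 1"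
  unfolding wd_verts_eq by (simp add: card_image card_cartesian_product)

lemma card_wd_verts_Diff_centre: "card (wd_verts r t - {None}) = t * (r - 1)"
  by (simp add: wd_verts_eq card_image card_cartesian_product)

lemma finite_wd_edges: "finite (wd_edges r t)"
proof (rule finite_subset)
  show "wd_edges r t \<subseteq> Pow (wd_verts r t)"
    unfolding wd_edges_def wd_verts_def by auto
qed (simp add: finite_wd_verts)

lemma blade_subset_wd_verts: "i < t \<Longrightarrow> blade r i \<subseteq> wd_verts r t - {None}"
  unfolding blade_def wd_verts_def by auto

lemma finite_blade: "finite (blade r i)"
  unfolding blade_def by simp

lemma card_blade: "card (blade r i) = r - 1"
  unfolding blade_def by (simp add: card_image inj_on_def)

lemma disjoint_blades: "i \<noteq> i' \<Longrightarrow> blade r i \<inter> blade r i' = {}"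
  unfolding blade_def by auto

lemma wd_edge_centre: "x \<in> wd_verts r t - {None} \<Longrightarrow> {None, x} \<in> wd_edges r t"
  unfolding wd_verts_def wd_edges_def by auto

lemma wd_edge_blade:
  assumes "i < t" and "x \<in> blade r i" and "y \<in> blade r i" and "x \<noteq> y"
  shows "{x, y} \<in> wd_edges r t"
proof -
  obtain j j' where "x = Some (i, j)" "y = Some (i, j')" "j < r - 1" "j' < r - 1"
    using assms(2,3) unfolding blade_def by blast
  with assms(1,4) show ?thesis unfolding wd_edges_def by blast
qed

lemma wd_walk_avoiding_centre_stays_in_blade:
  assumes "(x, y) \<in> (edge_rel F)\<^sup>*" and "F \<subseteq> wd_edges r t" and "\<forall>e\<in>F. None \<notin> e"
    and "x = Some (i, j)"
  shows "\<exists>j'. y = Some (i, j')"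
  using assms(1,4)
proof (induction arbitrary: j rule: rtrancl_induct)
  case (step y z)
  obtain j' where y: "y = Some (i, j')" using step.IH step.prems by blast
  have "{y, z} \<in> F" using step.hyps(2) unfolding edge_rel_def by simp
  then have "{y, z} \<in> wd_edges r t" using assms(2) by blast
  moreover have "z \<noteq> None" using \<open>{y, z} \<in> F\<close> assms(3) by (metis insertCI)
  then obtain a b where "z = Some (a, b)" by (cases z) force+
  ultimately show ?case using y unfolding wd_edges_def by (auto simp: doubleton_eq_iff)
qed simp

lemma steiner_dist_wd:
  assumes "S \<subseteq> wd_verts r t" and "S \<noteq> {}"
  shows "steiner_dist (wd_verts r t) (wd_edges r t) S
       = card S - 1 + (if scattered r t S then 1 else 0)"
proof -
  let ?V = "wd_verts r t" and ?E = "wd_edges r t"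
  note steiner = steiner_dist_eq_star[OF finite_wd_verts finite_wd_edges]
  have minimal: "card S \<le> card W'" if "S \<subseteq> W'" "W' \<subseteq> ?V" for W'
    using that finite_wd_verts by (meson card_mono finite_subset)
  consider (centre) "None \<in> S" | (blade) i where "i < t" "S \<subseteq> blade r i"
    | (spread) "scattered r t S"
    unfolding scattered_def by blast
  then show ?thesis
  proof cases
    case centre
    have "steiner_dist ?V ?E S = card S - 1"
    proof (rule steiner[OF _ assms(1) centre])
      show "{None, x} \<in> ?E" if "x \<in> S - {None}" for x
        using that assms(1) wd_edge_centre by blast
    qed (use minimal in auto)
    then show ?thesis using centre by (simp add: scattered_def)
  next
    case blade
    obtain c where c: "c \<in> S" using assms(2) by blast
    have "steiner_dist ?V ?E S = card S - 1"
    proof (rule steiner[OF _ assms(1) c])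
      show "{c, x} \<in> ?E" if "x \<in> S - {c}" for x
        using that c blade wd_edge_blade by blast
    qed (use minimal in auto)
    then show ?thesis using blade by (auto simp: scattered_def)
  next
    case spread
    have "steiner_dist ?V ?E S = card (insert None S) - 1"
    proof (rule steiner)
      fix W' F
      assume W': "S \<subseteq> W'" "W' \<subseteq> ?V" "F \<subseteq> ?E" "\<forall>e\<in>F. e \<subseteq> W'" "connected_sub W' F"
      have "None \<in> W'"
      proof (rule ccontr)
        assume "None \<notin> W'"
        then have avoid: "\<forall>e\<in>F. None \<notin> e" using W'(4) by blast
        obtain x where x: "x \<in> S" using assms(2) by blast
        then obtain i j where ij: "x = Some (i, j)" "i < t"
          using assms(1) spread unfolding scattered_def wd_verts_def by auto
        have "S \<subseteq> blade r i"
        proof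
          fix y assume y: "y \<in> S"
          then have "(x, y) \<in> (edge_rel F)\<^sup>*" using W'(1,5) x unfolding connected_sub_def by blast
          then obtain j' where "y = Some (i, j')"
            using wd_walk_avoiding_centre_stays_in_blade[OF _ W'(3) avoid ij(1)] by blast
          then show "y \<in> blade r i" using y assms(1) unfolding wd_verts_def blade_def by auto
        qed
        then show False using spread ij(2) unfolding scattered_def by blast
      qed
      then show "card (insert None S) \<le> card W'"
        using W'(1,2) finite_wd_verts by (meson card_mono finite_subset insert_subset)
    next
      show "{None, x} \<in> ?E" if "x \<in> insert None S - {None}" for x
        using that assms(1) wd_edge_centre by blast
    qed (use assms(1) in \<open>auto simp: wd_verts_def\<close>)
    moreover have "finite S" using assms(1) finite_wd_verts finite_subset by blast
    ultimately show ?thesis using spread assms(2) by (simp add: scattered_def card_gt_0_iff)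
  qed
qed

lemma card_blade_subsets:
  assumes "1 \<le> k"
  shows "card (\<Union>i<t. {S. S \<subseteq> blade r i \<and> card S = k}) = t * ((r - 1) choose k)"
proof -
  have disjoint: "{S. S \<subseteq> blade r i \<and> card S = k} \<inter> {S. S \<subseteq> blade r i' \<and> card S = k} = {}"
    if "i \<noteq> i'" for i i'
  proof (rule Int_emptyI)
    fix S assume "S \<in> {S. S \<subseteq> blade r i \<and> card S = k}" "S \<in> {S. S \<subseteq> blade r i' \<and> card S = k}"
    then have "S = {}" and "card S = k" using disjoint_blades[OF that, of r] by blast+
    then show False using assms by simp
  qed
  have "card (\<Union>i<t. {S. S \<subseteq> blade r i \<and> card S = k})
      = (\<Sum>i<t. card {S. S \<subseteq> blade r i \<and> card S = k})"
    by (rule card_UN_disjoint) (simp_all add: finite_blade disjoint)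
  also have "\<dots> = t * ((r - 1) choose k)"
    by (simp add: n_subsets finite_blade card_blade)
  finally show ?thesis .
qed

text \<open>A $k$-subset of the non-central vertices is either scattered or lies in exactly one blade.\<close>
lemma card_scattered_subsets:
  assumes "1 \<le> k"
  shows "card {S. S \<subseteq> wd_verts r t \<and> card S = k \<and> scattered r t S} + t * ((r - 1) choose k)
       = (t * (r - 1)) choose k"
proof -
  let ?C = "{S. S \<subseteq> wd_verts r t - {None} \<and> card S = k}"
  let ?U = "\<Union>i<t. {S. S \<subseteq> blade r i \<and> card S = k}"
  have scattered_eq: "{S. S \<subseteq> wd_verts r t \<and> card S = k \<and> scattered r t S} = ?C - ?U"
    by (auto simp: scattered_def)
  have subset: "?U \<subseteq> ?C"
  proof
    fix S assume "S \<in> ?U"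
    then obtain i where "i < t" "S \<subseteq> blade r i" "card S = k" by blast
    then show "S \<in> ?C" using blade_subset_wd_verts[of i t r] by blast
  qed
  have "finite ?C" using finite_wd_verts by simp
  then have "card (?C - ?U) = card ?C - card ?U" and "card ?U \<le> card ?C"
    using subset by (simp_all add: card_Diff_subset finite_subset card_mono)
  then have "card (?C - ?U) + card ?U = card ?C" by simp
  then show ?thesis
    unfolding scattered_eq card_blade_subsets[OF assms]
    by (simp add: n_subsets finite_wd_verts card_wd_verts_Diff_centre)
qed

lemma steiner_wiener_wd:
  assumes "1 \<le> k"
  shows "steiner_wiener (wd_verts r t) (wd_edges r t) k
       = (k - 1) * ((t * (r - 1) + 1) choose k)
         + card {S. S \<subseteq> wd_verts r t \<and> card S = k \<and> scattered r t S}"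
proof -
  let ?A = "{S. S \<subseteq> wd_verts r t \<and> card S = k}"
  have "steiner_wiener (wd_verts r t) (wd_edges r t) k
      = (\<Sum>S\<in>?A. (k - 1) + (if scattered r t S then 1 else 0))"
    unfolding steiner_wiener_def
  proof (rule sum.cong)
    fix S assume "S \<in> ?A"
    then have "S \<subseteq> wd_verts r t" and "S \<noteq> {}" and "card S = k" using assms by auto
    then show "steiner_dist (wd_verts r t) (wd_edges r t) S
        = (k - 1) + (if scattered r t S then 1 else 0)"
      by (simp add: steiner_dist_wd)
  qed simp
  also have "\<dots> = (k - 1) * card ?A + card {S \<in> ?A. scattered r t S}"
    by (simp add: sum.distrib sum.If_cases finite_wd_verts Int_def)
  finally show ?thesis
    by (simp add: n_subsets finite_wd_verts card_wd_verts conj_assoc)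
qed

theorem mainTheorem7:
  fixes r t n k :: nat
  assumes "r \<ge> 2" and "t \<ge> 2"
    and "n = t * (r - 1) + 1"
    and "2 \<le> k" and "k \<le> n"
  shows "int (steiner_wiener (wd_verts r t) (wd_edges r t) k)
           = int (n - 1) * int ((n - 1) choose (k - 1)) - int t * int ((r - 1) choose k)"
proof -
  let ?N = "t * (r - 1)"
  have "steiner_wiener (wd_verts r t) (wd_edges r t) k + t * ((r - 1) choose k)
      = (k - 1) * (Suc ?N choose k) + (?N choose k)"
    using steiner_wiener_wd card_scattered_subsets assms(4) by simp
  also have "\<dots> = ?N * (?N choose (k - 1))"
    by (rule binomial_weighted_sum) (use assms in auto)
  finally show ?thesis
    using assms(3) by (simp flip: of_nat_mult of_nat_add add: algebra_simps)
qed

end
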